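(* Let $0<\sigma<1$ and $F_{n,\sigma}=\sum_{\kappa/\lambda\in\mathcal F_n}\frac{\cos(2\pi\kappa/\lambda)}{(\kappa\lambda)^\sigma}$. Then $$F_{n,\sigma}=\frac{n^{2(1-\sigma)}}{2(1-\sigma)\zeta(2)}\int_0^1\frac{\cos2\pi t}{t^\sigma}dt+O_\sigma\big(n^{1-\sigma}\big).$$
   Context: $\mathcal F_n=\{j/m: 1\le j\le m\le n,\ \gcd(j,m)=1\}$ is the Farey series of order $n$ (fractions in lowest terms, including $1/1$). $\zeta$ is the Riemann zeta function. *)

theory Defs
  imports "HOL-Analysis.Analysis"
begin

text \<open>Farey series of order n, as pairs (j, m) representing j/m in lowest terms,
  1 <= j <= m <= n, gcd(j, m) = 1 (includes 1/1).\<close>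
definition farey :: "nat \<Rightarrow> (nat \<times> nat) set" where
  "farey n = {(j, m). 1 \<le> j \<and> j \<le> m \<and> m \<le> n \<and> coprime j m}"

definition zeta2 :: real where
  "zeta2 = (\<Sum>k. 1 / (real (Suc k))\<^sup>2)"

definition F_sum :: "nat \<Rightarrow> real \<Rightarrow> real" where
  "F_sum n \<sigma> = (\<Sum>(j, m)\<in>farey n. cos (2 * pi * real j / real m) / (real j * real m) powr \<sigma>)"

end

(*
  Moebius inversion over gcd (j, m) gives
    F(n) = sum_{d <= n} mu(d) d^(-2 sigma) G(n div d),
  where G(N) is the same sum over all pairs 1 <= j <= m <= N. The inner sums
  sum_{j <= m} cos(2 pi j / m) j^(-sigma) are Riemann sums of m^(1 - sigma) I with
  I = int_0^1 cos(2 pi t) t^(-sigma) dt and error O(1), hence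
    G(N) = I N^(2 - 2 sigma) / (2 - 2 sigma) + O(N^(1 - sigma)).
  The identity sum_{d <= n} mu(d) Z(n div d) / d^2 = 1 for the partial sums Z of zeta(2)
  turns the main term into a Moebius sum of the same shape, and since Z(N) = zeta(2) + O(1/N)
  the terms differ by O((n/d)^(1 - sigma) d^(-2 sigma)); summing n^(1 - sigma) d^(-1 - sigma)
  over d gives O(n^(1 - sigma)).
*)

theory Submission
  imports Defs "HOL-Computational_Algebra.Squarefree"
begin

definition moebius_mu :: "nat \<Rightarrow> real" where
  "moebius_mu d = (if squarefree d then (-1) ^ card (prime_factors d) else 0)"

lemma abs_moebius_mu_le: "\<bar>moebius_mu d\<bar> \<le> 1"
  by (simp add: moebius_mu_def)

lemma moebius_mu_mult_prime:
  assumes p: "prime p" and "\<not> p dvd d" and "d > 0"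
  shows "moebius_mu (p * d) = - moebius_mu d"
proof (cases "squarefree d")
  case True
  have "coprime p d"
    using prime_imp_coprime[OF p] \<open>\<not> p dvd d\<close> .
  then have "squarefree (p * d)"
    using True squarefree_prime[OF p] by (simp add: squarefree_mult_coprime)
  moreover have "prime_factors (p * d) = insert p (prime_factors d)"
    using p \<open>d > 0\<close> by (auto simp: prime_factors_product prime_prime_factors)
  moreover have "p \<notin> prime_factors d"
    using \<open>\<not> p dvd d\<close> by auto
  ultimately show ?thesis
    using True \<open>d > 0\<close> by (simp add: moebius_mu_def)
next
  case False
  then have "\<not> squarefree (p * d)"
    using squarefree_mono[of d "p * d"] by auto
  with False show ?thesis
    by (simp add: moebius_mu_def)
qed

lemma sum_moebius_mu_divisors_dvd_prime:
  assumes p: "prime p" "p dvd n" and "n > 0"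
  shows "(\<Sum>d | d dvd n \<and> p dvd d. moebius_mu d) = - (\<Sum>d | d dvd n \<and> \<not> p dvd d. moebius_mu d)"
proof -
  define D0 where "D0 = {d. d dvd n \<and> \<not> p dvd d}"
  define D1 where "D1 = {d. d dvd n \<and> p dvd d}"
  \<comment> \<open>Divisors prime to p pair off with their multiples by p; every other multiple of p
    among the divisors is divisible by p squared.\<close>
  have "p * d \<in> D1" if "d \<in> D0" for d
    using that p prime_imp_coprime[OF p(1)] by (auto simp: D0_def D1_def divides_mult)
  then have sub: "(*) p ` D0 \<subseteq> D1"
    by blast
  have inj: "inj_on ((*) p) D0"
    using prime_gt_0_nat[OF p(1)] by (auto simp: inj_on_def)
  have zero: "moebius_mu x = 0" if "x \<in> D1 - (*) p ` D0" for x
  proof -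
    have "p dvd x"
      using that by (simp add: D1_def)
    then obtain y where y: "x = p * y" ..
    moreover have "y dvd n"
      using that y by (auto simp: D1_def intro: dvd_mult_right)
    ultimately have "p dvd y"
      using that by (auto simp: D0_def)
    then have "p\<^sup>2 dvd x"
      using y by (simp add: power2_eq_square)
    then have "\<not> squarefree x"
      using p(1) by (metis not_prime_unit not_squarefreeI)
    then show ?thesis
      by (simp add: moebius_mu_def)
  qed
  have "finite D1"
    using \<open>n > 0\<close> by (simp add: D1_def)
  then have "sum moebius_mu D1 = sum moebius_mu ((*) p ` D0)"
    using sum.mono_neutral_right[OF _ sub] zero by blast
  also have "\<dots> = (\<Sum>d\<in>D0. moebius_mu (p * d))"
    using sum.reindex[OF inj] by simp
  also have "\<dots> = (\<Sum>d\<in>D0. - moebius_mu d)"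
    using p \<open>n > 0\<close> by (intro sum.cong) (auto simp: D0_def moebius_mu_mult_prime dvd_pos_nat)
  also have "\<dots> = - sum moebius_mu D0"
    by (simp add: sum_negf)
  finally show ?thesis
    by (simp add: D0_def D1_def)
qed

lemma sum_moebius_mu_divisors:
  assumes "n > 0"
  shows "(\<Sum>d | d dvd n. moebius_mu d) = (if n = 1 then 1 else 0)"
proof (cases "n = 1")
  case True
  then show ?thesis
    by (simp add: moebius_mu_def)
next
  case False
  obtain p where p: "prime p" "p dvd n"
    using prime_factor_nat[OF False] by blast
  have "(\<Sum>d | d dvd n. moebius_mu d) = sum moebius_mu ({d. d dvd n \<and> \<not> p dvd d} \<union> {d. d dvd n \<and> p dvd d})"
    by (rule sum.cong) auto
  also have "\<dots> = (\<Sum>d | d dvd n \<and> \<not> p dvd d. moebius_mu d) + (\<Sum>d | d dvd n \<and> p dvd d. moebius_mu d)"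
    using \<open>n > 0\<close> by (intro sum.union_disjoint) auto
  finally show ?thesis
    using sum_moebius_mu_divisors_dvd_prime[OF p \<open>n > 0\<close>] False by simp
qed

lemma sum_moebius_mu_filter:
  fixes a :: "'a \<Rightarrow> real"
  assumes "finite A" and g: "\<And>x. x \<in> A \<Longrightarrow> 1 \<le> g x \<and> g x \<le> n"
  shows "(\<Sum>d=1..n. moebius_mu d * (\<Sum>x | x \<in> A \<and> d dvd g x. a x)) = (\<Sum>x | x \<in> A \<and> g x = 1. a x)"
proof -
  have divisor_sum: "(\<Sum>d=1..n. if d dvd g x then moebius_mu d else 0) = (if g x = 1 then 1 else 0)"
    if "x \<in> A" for x
  proof -
    have "(\<Sum>d=1..n. if d dvd g x then moebius_mu d else 0) = (\<Sum>d\<in>{1..n} \<inter> {d. d dvd g x}. moebius_mu d)"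
      by (simp add: sum.inter_restrict)
    also have "{1..n} \<inter> {d. d dvd g x} = {d. d dvd g x}"
      using g[OF that] by (auto simp: Suc_le_eq dvd_pos_nat intro: order.trans[OF dvd_imp_le])
    also have "(\<Sum>d | d dvd g x. moebius_mu d) = (if g x = 1 then 1 else 0)"
      using g[OF that] by (intro sum_moebius_mu_divisors) auto
    finally show ?thesis .
  qed
  have "(\<Sum>d=1..n. moebius_mu d * (\<Sum>x | x \<in> A \<and> d dvd g x. a x))
      = (\<Sum>d=1..n. \<Sum>x\<in>A. (if d dvd g x then moebius_mu d else 0) * a x)"
    using \<open>finite A\<close> by (auto simp: sum.inter_filter sum_distrib_left intro!: sum.cong)
  also have "\<dots> = (\<Sum>x\<in>A. (\<Sum>d=1..n. if d dvd g x then moebius_mu d else 0) * a x)"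
    by (subst sum.swap) (simp add: sum_distrib_right)
  also have "\<dots> = (\<Sum>x\<in>A. if g x = 1 then a x else 0)"
    using divisor_sum by (intro sum.cong) auto
  also have "\<dots> = (\<Sum>x | x \<in> A \<and> g x = 1. a x)"
    using \<open>finite A\<close> by (simp add: sum.inter_filter)
  finally show ?thesis .
qed

section \<open>Moebius inversion\<close>

definition index_pairs :: "nat \<Rightarrow> (nat \<times> nat) set" where
  "index_pairs N = {(j, m). 1 \<le> j \<and> j \<le> m \<and> m \<le> N}"

definition farey_term :: "real \<Rightarrow> nat \<Rightarrow> nat \<Rightarrow> real" where
  "farey_term s j m = cos (2 * pi * real j / real m) / (real j * real m) powr s"

definition unreduced_farey_sum :: "real \<Rightarrow> nat \<Rightarrow> real" where
  "unreduced_farey_sum s N = (\<Sum>(j, m)\<in>index_pairs N. farey_term s j m)"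

definition zeta2_partial :: "nat \<Rightarrow> real" where
  "zeta2_partial N = (\<Sum>k=1..N. 1 / (real k)\<^sup>2)"

lemma finite_index_pairs [simp]: "finite (index_pairs N)"
  by (rule finite_subset[of _ "{..N} \<times> {..N}"]) (auto simp: index_pairs_def)

lemma multiples_in_atLeastAtMost:
  fixes d n :: nat
  assumes "d > 0"
  shows "{k \<in> {1..n}. d dvd k} = (*) d ` {1..n div d}"
proof (intro set_eqI iffI)
  fix k assume "k \<in> {k \<in> {1..n}. d dvd k}"
  then obtain e where "k = d * e" "1 \<le> d * e" "d * e \<le> n"
    by (auto elim!: dvdE)
  moreover from this have "e \<in> {1..n div d}"
    using assms by (simp add: less_eq_div_iff_mult_less_eq mult.commute Suc_le_eq)
  ultimately show "k \<in> (*) d ` {1..n div d}"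
    by blast
next
  fix k assume "k \<in> (*) d ` {1..n div d}"
  then show "k \<in> {k \<in> {1..n}. d dvd k}"
    using assms by (auto simp: less_eq_div_iff_mult_less_eq mult.commute)
qed

lemma multiples_in_index_pairs:
  assumes "d > 0"
  shows "{x \<in> index_pairs n. d dvd gcd (fst x) (snd x)} = (\<lambda>(j, m). (d * j, d * m)) ` index_pairs (n div d)"
proof (intro set_eqI iffI)
  fix x assume "x \<in> {x \<in> index_pairs n. d dvd gcd (fst x) (snd x)}"
  then obtain j m where "x = (d * j, d * m)" "1 \<le> d * j" "d * j \<le> d * m" "d * m \<le> n"
    by (auto simp: index_pairs_def elim!: dvdE)
  moreover from this have "(j, m) \<in> index_pairs (n div d)"
    using assms by (simp add: index_pairs_def less_eq_div_iff_mult_less_eq mult.commute Suc_le_eq)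
  ultimately show "x \<in> (\<lambda>(j, m). (d * j, d * m)) ` index_pairs (n div d)"
    by force
next
  fix x assume "x \<in> (\<lambda>(j, m). (d * j, d * m)) ` index_pairs (n div d)"
  then show "x \<in> {x \<in> index_pairs n. d dvd gcd (fst x) (snd x)}"
    using assms by (auto simp: index_pairs_def less_eq_div_iff_mult_less_eq mult.commute)
qed

lemma sum_coprime_index_pairs_moebius:
  fixes f :: "nat \<Rightarrow> nat \<Rightarrow> real"
  shows "(\<Sum>(j, m) | (j, m) \<in> index_pairs n \<and> coprime j m. f j m)
    = (\<Sum>d=1..n. moebius_mu d * (\<Sum>(j, m)\<in>index_pairs (n div d). f (d * j) (d * m)))"
proof -
  have "(\<Sum>d=1..n. moebius_mu d * (\<Sum>x | x \<in> index_pairs n \<and> d dvd gcd (fst x) (snd x). f (fst x) (snd x)))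
      = (\<Sum>x | x \<in> index_pairs n \<and> gcd (fst x) (snd x) = 1. f (fst x) (snd x))"
    by (rule sum_moebius_mu_filter[OF finite_index_pairs])
      (auto simp: index_pairs_def Suc_le_eq intro: order.trans[OF gcd_le1_nat])
  moreover have "(\<Sum>x | x \<in> index_pairs n \<and> d dvd gcd (fst x) (snd x). f (fst x) (snd x))
      = (\<Sum>(j, m)\<in>index_pairs (n div d). f (d * j) (d * m))" if "d \<in> {1..n}" for d
  proof -
    have "d > 0"
      using that by simp
    then have "inj_on (\<lambda>(j, m). (d * j, d * m)) (index_pairs (n div d))"
      by (auto simp: inj_on_def)
    then show ?thesis
      unfolding multiples_in_index_pairs[OF \<open>d > 0\<close>] by (subst sum.reindex) (auto simp: case_prod_beta)
  qed
  moreover have "{(j, m). (j, m) \<in> index_pairs n \<and> coprime j m} = {x \<in> index_pairs n. gcd (fst x) (snd x) = 1}"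
    by (auto simp: coprime_iff_gcd_eq_1)
  ultimately show ?thesis
    by (simp add: case_prod_beta)
qed

lemma farey_term_mult:
  assumes "d > 0"
  shows "farey_term s (d * j) (d * m) = farey_term s j m / real d powr (2 * s)"
proof -
  have "(real (d * j) * real (d * m)) powr s = real d powr s * real d powr s * (real j * real m) powr s"
    by (simp add: powr_mult mult_ac)
  also have "\<dots> = real d powr (2 * s) * (real j * real m) powr s"
    by (simp add: powr_add[symmetric])
  finally show ?thesis
    using assms by (simp add: farey_term_def ac_simps)
qed

lemma F_sum_moebius:
  "F_sum n s = (\<Sum>d=1..n. moebius_mu d * unreduced_farey_sum s (n div d) / real d powr (2 * s))"
proof -
  have "farey n = {(j, m). (j, m) \<in> index_pairs n \<and> coprime j m}"
    by (auto simp: farey_def index_pairs_def)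
  then have "F_sum n s = (\<Sum>(j, m) | (j, m) \<in> index_pairs n \<and> coprime j m. farey_term s j m)"
    by (simp add: F_sum_def farey_term_def)
  also have "\<dots> = (\<Sum>d=1..n. moebius_mu d * (\<Sum>(j, m)\<in>index_pairs (n div d). farey_term s (d * j) (d * m)))"
    by (rule sum_coprime_index_pairs_moebius)
  also have "\<dots> = (\<Sum>d=1..n. moebius_mu d * unreduced_farey_sum s (n div d) / real d powr (2 * s))"
    by (intro sum.cong) (auto simp: farey_term_mult unreduced_farey_sum_def case_prod_beta sum_divide_distrib[symmetric])
  finally show ?thesis .
qed

lemma sum_moebius_zeta2_partial:
  assumes "n \<ge> 1"
  shows "(\<Sum>d=1..n. moebius_mu d * zeta2_partial (n div d) / (real d)\<^sup>2) = 1"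
proof -
  have "(\<Sum>d=1..n. moebius_mu d * (\<Sum>k | k \<in> {1..n} \<and> d dvd k. 1 / (real k)\<^sup>2))
      = (\<Sum>k | k \<in> {1..n} \<and> k = 1. 1 / (real k)\<^sup>2)"
    by (rule sum_moebius_mu_filter[where g = "\<lambda>k. k"]) auto
  moreover have "{k. k \<in> {1..n} \<and> k = 1} = {1}"
    using assms by auto
  moreover have "(\<Sum>k | k \<in> {1..n} \<and> d dvd k. 1 / (real k)\<^sup>2) = zeta2_partial (n div d) / (real d)\<^sup>2"
    if "d \<in> {1..n}" for d
  proof -
    have "d > 0"
      using that by simp
    then have "inj_on ((*) d) {1..n div d}"
      by (auto simp: inj_on_def)
    then show ?thesis
      unfolding multiples_in_atLeastAtMost[OF \<open>d > 0\<close>]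
      by (subst sum.reindex) (auto simp: zeta2_partial_def sum_divide_distrib power_mult_distrib mult.commute)
  qed
  ultimately show ?thesis
    by simp
qed

lemma zeta2_minus_partial_bounds:
  assumes "N \<ge> 1"
  shows "0 \<le> zeta2 - zeta2_partial N" "zeta2 - zeta2_partial N \<le> 1 / real N"
proof -
  define f where "f k = 1 / (real (Suc k))\<^sup>2" for k
  have "summable (\<lambda>k. inverse (real k ^ 2))"
    by (rule inverse_power_summable) simp
  then have "summable f"
    unfolding f_def by (subst (asm) summable_Suc_iff[symmetric]) (simp add: inverse_eq_divide)
  moreover have "(\<Sum>k<N. f k) = zeta2_partial N"
    unfolding f_def zeta2_partial_def by (induction N) (auto simp: atLeastAtMostSuc_conv)
  ultimately have tail: "zeta2 - zeta2_partial N = (\<Sum>k. f (k + N))"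
    using suminf_split_initial_segment[of f N] by (simp add: zeta2_def f_def[abs_def])
  have summable_tail: "summable (\<lambda>k. f (k + N))"
    using \<open>summable f\<close> by (simp add: summable_iff_shift)
  then show "0 \<le> zeta2 - zeta2_partial N"
    unfolding tail by (auto simp: f_def intro!: suminf_nonneg)
  have "f (k + N) \<le> 1 / real (k + N) - 1 / real (Suc k + N)" for k
  proof -
    define a where "a = real (k + N)"
    have "a \<ge> 1"
      using assms by (simp add: a_def)
    then have "1 / (a + 1)\<^sup>2 \<le> 1 / (a * (a + 1))"
      by (intro divide_left_mono) (auto simp: power2_eq_square)
    also have "\<dots> = 1 / a - 1 / (a + 1)"
      using \<open>a \<ge> 1\<close> by (simp add: field_simps)
    finally show ?thesis
      by (simp add: f_def a_def add_ac)
  qed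
  moreover have "(\<lambda>k. 1 / real (k + N) - 1 / real (Suc k + N)) sums (1 / real N)"
    using telescope_sums'[OF LIMSEQ_ignore_initial_segment[OF lim_inverse_n', of N]] by simp
  ultimately show "zeta2 - zeta2_partial N \<le> 1 / real N"
    unfolding tail by (rule sums_le[OF _ summable_sums[OF summable_tail]])
qed

lemma zeta2_ge_1: "zeta2 \<ge> 1"
  using zeta2_minus_partial_bounds(1)[of 1] by (simp add: zeta2_partial_def)

lemma zeta2_partial_ratio_bounds:
  assumes "N \<ge> 1"
  shows "0 \<le> 1 - zeta2_partial N / zeta2" "1 - zeta2_partial N / zeta2 \<le> 1 / real N"
proof -
  have "1 - zeta2_partial N / zeta2 = (zeta2 - zeta2_partial N) / zeta2"
    using zeta2_ge_1 by (simp add: field_simps)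
  moreover have "(zeta2 - zeta2_partial N) / zeta2 \<le> (zeta2 - zeta2_partial N) / 1"
    using zeta2_ge_1 zeta2_minus_partial_bounds(1)[OF assms] by (intro divide_left_mono) auto
  ultimately show "0 \<le> 1 - zeta2_partial N / zeta2" "1 - zeta2_partial N / zeta2 \<le> 1 / real N"
    using zeta2_ge_1 zeta2_minus_partial_bounds[OF assms] by auto
qed

section \<open>Power sums\<close>

lemma powr_mean_value:
  fixes a b p :: real
  assumes "0 < a" "a < b"
  obtains z where "a < z" "z < b" "b powr p - a powr p = (b - a) * (p * z powr (p - 1))"
proof -
  have "((\<lambda>x. x powr p) has_real_derivative p * x powr (p - 1)) (at x)" if "a \<le> x" for x
    using assms that by (intro has_real_derivative_powr) auto
  then obtain z where "a < z" "z < b" "b powr p - a powr p = (b - a) * (p * z powr (p - 1))"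
    using MVT2[OF \<open>a < b\<close>, of "\<lambda>x. x powr p" "\<lambda>x. p * x powr (p - 1)"] by blast
  then show ?thesis
    by (rule that)
qed

lemma sum_powr_minus_integral:
  fixes q :: real
  assumes "q \<noteq> -1" and "N \<ge> 1"
  defines "E \<equiv> \<lambda>k. (\<Sum>m=1..k. real m powr q) - (real k powr (q + 1) + q) / (q + 1)"
  shows "\<bar>E N\<bar> \<le> \<bar>real N powr q - 1\<bar>" and "q \<le> 0 \<Longrightarrow> E N \<le> 0"
proof -
  \<comment> \<open>(N powr (q + 1) + q) / (q + 1) is 1 plus the integral of x powr q over [1, N]; by the
    mean value theorem each step of E is (n + 1) powr q - z powr q with n < z < n + 1.\<close>
  have "(0 \<le> q \<longrightarrow> 0 \<le> E N \<and> E N \<le> real N powr q - 1) \<and> (q \<le> 0 \<longrightarrow> real N powr q - 1 \<le> E N \<and> E N \<le> 0)"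
    using \<open>N \<ge> 1\<close>
  proof (induction N rule: dec_induct)
    case base
    then show ?case
      using assms(1) by (simp add: E_def field_simps)
  next
    case (step n)
    have "real n > 0"
      using step.hyps by simp
    then obtain z where z: "real n < z" "z < real (Suc n)"
      and mvt: "real (Suc n) powr (q + 1) - real n powr (q + 1) = (q + 1) * z powr q"
      using powr_mean_value[of "real n" "real (Suc n)" "q + 1"] by auto
    have "E (Suc n) - E n = real (Suc n) powr q - ((real (Suc n) powr (q + 1) - real n powr (q + 1)) / (q + 1))"
      by (simp add: E_def diff_divide_distrib add_divide_distrib)
    also have "\<dots> = real (Suc n) powr q - z powr q"
      using mvt assms(1) by simp
    finally have step_E: "E (Suc n) - E n = real (Suc n) powr q - z powr q" .
    have "0 \<le> q \<Longrightarrow> real n powr q \<le> z powr q \<and> z powr q \<le> real (Suc n) powr q"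
      using z \<open>real n > 0\<close> by (auto intro: powr_mono2)
    moreover have "q \<le> 0 \<Longrightarrow> z powr q \<le> real n powr q \<and> real (Suc n) powr q \<le> z powr q"
      using z \<open>real n > 0\<close> by (auto intro: powr_mono2')
    ultimately show ?case
      using step.IH step_E by linarith
  qed
  then show "\<bar>E N\<bar> \<le> \<bar>real N powr q - 1\<bar>" and "q \<le> 0 \<Longrightarrow> E N \<le> 0"
    by linarith+
qed

lemma powr_diff_le_of_unit_gap:
  fixes x y p r :: real
  assumes "1 \<le> y" "y \<le> x" "x \<le> y + 1" and "0 \<le> r" "p - 1 \<le> r" "0 \<le> p"
  shows "x powr p - y powr p \<le> p * x powr r"
proof (cases "y = x")
  case True
  then show ?thesis
    using assms by simp
next
  case False
  then have "0 < y" "y < x"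
    using assms by auto
  then obtain z where z: "y < z" "z < x" and mvt: "x powr p - y powr p = (x - y) * (p * z powr (p - 1))"
    by (rule powr_mean_value)
  have "z powr (p - 1) \<le> z powr r"
    using assms z by (intro powr_mono) auto
  also have "\<dots> \<le> x powr r"
    using assms z by (intro powr_mono2) auto
  finally have "p * z powr (p - 1) \<le> p * x powr r"
    using assms by (intro mult_left_mono)
  moreover have "(x - y) * (p * z powr (p - 1)) \<le> p * z powr (p - 1)"
    using assms by (intro mult_left_le_one_le) auto
  ultimately show ?thesis
    unfolding mvt by linarith
qed

lemma abs_sum_powr_minus_integral_le:
  fixes q r :: real
  assumes "-1 < q" "q \<le> 1" "q \<le> r" "0 \<le> r" "N \<ge> 1"
  shows "\<bar>(\<Sum>m=1..N. real m powr q) - real N powr (q + 1) / (q + 1)\<bar> \<le> (1 + 1 / (q + 1)) * real N powr r"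
proof -
  have N_powr: "1 \<le> real N powr r" "real N powr q \<le> real N powr r"
    using assms by (auto intro: ge_one_powr_ge_zero powr_mono)
  have "\<bar>(\<Sum>m=1..N. real m powr q) - (real N powr (q + 1) + q) / (q + 1)\<bar> \<le> \<bar>real N powr q - 1\<bar>"
    using sum_powr_minus_integral(1)[of q N] assms by simp
  also have "\<dots> \<le> real N powr r"
    unfolding abs_le_iff using N_powr powr_ge_zero[of "real N" q] by linarith
  finally have "\<bar>(\<Sum>m=1..N. real m powr q) - (real N powr (q + 1) + q) / (q + 1)\<bar> \<le> real N powr r" .
  moreover have "\<bar>q / (q + 1)\<bar> \<le> real N powr r / (q + 1)"
    using assms N_powr by (simp add: abs_divide divide_right_mono abs_le_iff)
  ultimately have "\<bar>(\<Sum>m=1..N. real m powr q) - real N powr (q + 1) / (q + 1)\<bar>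
      \<le> real N powr r + real N powr r / (q + 1)"
    unfolding add_divide_distrib abs_le_iff by linarith
  then show ?thesis
    by (simp add: algebra_simps)
qed

lemma sum_powr_minus_one_minus_le:
  fixes \<sigma> :: real
  assumes "0 < \<sigma>"
  shows "(\<Sum>d=1..n. real d powr (-1 - \<sigma>)) \<le> 1 + 1 / \<sigma>"
proof (cases "n = 0")
  case False
  then have "(\<Sum>d=1..n. real d powr (-1 - \<sigma>)) \<le> (1 + \<sigma> - real n powr (- \<sigma>)) / \<sigma>"
    using sum_powr_minus_integral(2)[of "-1 - \<sigma>" n] assms by (simp add: field_simps)
  also have "\<dots> \<le> 1 + 1 / \<sigma>"
    using assms by (simp add: field_simps)
  finally show ?thesis .
qed (use assms in simp)

section \<open>Riemann sums of cos(2 pi x / m) / x powr sigma\<close>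

definition cos_powr_integral :: "real \<Rightarrow> real" where
  "cos_powr_integral \<sigma> = integral {0..1} (\<lambda>t. cos (2 * pi * t) / t powr \<sigma>)"

lemma abs_cos_div_powr_le:
  fixes x :: real
  assumes "0 \<le> x"
  shows "\<bar>cos y / x powr \<sigma>\<bar> \<le> x powr (- \<sigma>)"
proof (cases "x = 0")
  case False
  then have "\<bar>cos y / x powr \<sigma>\<bar> \<le> 1 / x powr \<sigma>"
    using assms by (simp add: abs_divide divide_right_mono)
  then show ?thesis
    by (simp add: powr_minus_divide)
qed simp

lemma set_integrable_cos_div_powr:
  fixes \<sigma> :: real
  assumes "\<sigma> < 1"
  shows "set_integrable lborel {0..1} (\<lambda>t. cos (2 * pi * t) / t powr \<sigma>)"
proof (rule set_integrable_bound)
  have "(\<lambda>t. t powr (- \<sigma>)) absolutely_integrable_on {0..1}"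
    using assms by (subst absolutely_integrable_on_iff_nonneg) (auto intro: integrable_on_powr_from_0)
  then show "set_integrable lborel {0..1} (\<lambda>t. t powr (- \<sigma>))"
    unfolding set_integrable_def by (subst (asm) integrable_completion) auto
  show "set_borel_measurable lborel {0..1} (\<lambda>t. cos (2 * pi * t) / t powr \<sigma>)"
    unfolding set_borel_measurable_def by measurable
  show "AE t in lborel. t \<in> {0..1} \<longrightarrow> norm (cos (2 * pi * t) / t powr \<sigma>) \<le> norm (t powr (- \<sigma>))"
    using abs_cos_div_powr_le by (intro AE_I2) auto
qed

lemma LBINT_cos_div_powr:
  fixes \<sigma> :: real
  assumes "\<sigma> < 1"
  shows "(LBINT t=0..1. cos (2 * pi * t) / t powr \<sigma>) = cos_powr_integral \<sigma>"
  using interval_integral_eq_integral[OF _ set_integrable_cos_div_powr[OF assms]]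
  by (simp add: cos_powr_integral_def zero_ereal_def one_ereal_def)

lemma has_integral_cos_div_powr_scaled:
  fixes \<sigma> c :: real
  assumes "\<sigma> < 1" "c > 0"
  shows "((\<lambda>x. cos (2 * pi * x / c) / x powr \<sigma>) has_integral c powr (1 - \<sigma>) * cos_powr_integral \<sigma>) {0..c}"
proof -
  have "((\<lambda>t. cos (2 * pi * t) / t powr \<sigma>) has_integral cos_powr_integral \<sigma>) (cbox 0 1)"
    using set_borel_integral_eq_integral(1)[OF set_integrable_cos_div_powr[OF assms(1)]]
    by (simp add: cos_powr_integral_def integrable_integral)
  from has_integral_affinity'[OF this, of "1 / c" 0]
  have "((\<lambda>x. cos (2 * pi * (x / c)) / (x / c) powr \<sigma>) has_integral c * cos_powr_integral \<sigma>) {0..c}"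
    using assms by simp
  then have "((\<lambda>x. c powr (- \<sigma>) * (cos (2 * pi * (x / c)) / (x / c) powr \<sigma>))
      has_integral c powr (- \<sigma>) * (c * cos_powr_integral \<sigma>)) {0..c}"
    by (rule has_integral_mult_right)
  then have "((\<lambda>x. cos (2 * pi * x / c) / x powr \<sigma>) has_integral c powr (- \<sigma>) * (c * cos_powr_integral \<sigma>)) {0..c}"
    by (rule has_integral_eq[rotated]) (use assms in \<open>simp add: powr_divide powr_minus_divide\<close>)
  then show ?thesis
    using assms by (simp add: powr_diff powr_minus_divide)
qed

definition cos_powr_sum :: "real \<Rightarrow> nat \<Rightarrow> real" where
  "cos_powr_sum \<sigma> m = (\<Sum>j=1..m. cos (2 * pi * real j / real m) / real j powr \<sigma>)"

lemma abs_cos_diff_le: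
  fixes a b :: real
  shows "\<bar>cos a - cos b\<bar> \<le> \<bar>a - b\<bar>"
proof -
  have "\<bar>cos a - cos b\<bar> = 2 * \<bar>sin ((a + b) / 2)\<bar> * \<bar>sin ((b - a) / 2)\<bar>"
    by (simp add: cos_diff_cos abs_mult)
  also have "\<dots> \<le> 2 * 1 * \<bar>(b - a) / 2\<bar>"
    by (intro mult_mono abs_sin_x_le_abs_x) auto
  finally show ?thesis
    by simp
qed

lemma abs_cos_div_diff_le:
  fixes a b u v :: real
  assumes "0 < u" "1 \<le> v"
  shows "\<bar>cos a / u - cos b / v\<bar> \<le> \<bar>1 / u - 1 / v\<bar> + \<bar>a - b\<bar>"
proof -
  have "cos a / u - cos b / v = cos a * (1 / u - 1 / v) + (cos a - cos b) / v"
    using assms by (simp add: field_simps)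
  moreover have "\<bar>cos a * (1 / u - 1 / v)\<bar> \<le> \<bar>1 / u - 1 / v\<bar>"
    by (simp add: abs_mult mult_left_le_one_le)
  moreover have "\<bar>(cos a - cos b) / v\<bar> \<le> \<bar>cos a - cos b\<bar>"
    using assms by (simp add: abs_divide divide_le_eq mult_le_cancel_left1)
  ultimately show ?thesis
    using abs_cos_diff_le[of a b] by linarith
qed

lemma abs_sub_integral_le:
  fixes g :: "real \<Rightarrow> real"
  assumes "a \<le> b" "g integrable_on {a..b}" and bound: "\<And>x. x \<in> {a..b} \<Longrightarrow> \<bar>g c - g x\<bar> \<le> B"
  shows "\<bar>(b - a) * g c - integral {a..b} g\<bar> \<le> (b - a) * B"
proof -
  have int: "((\<lambda>x. g c - g x) has_integral (b - a) * g c - integral {a..b} g) {a..b}"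
    using has_integral_diff[OF has_integral_const_real integrable_integral[OF assms(2)]] assms(1)
    by simp
  have "0 \<le> B"
    using bound[of a] assms(1) by force
  moreover have "\<And>x. x \<in> {a..b} - {} \<Longrightarrow> norm (g c - g x) \<le> B"
    using bound by simp
  ultimately show ?thesis
    using has_integral_bound_real[OF _ finite.emptyI int] assms(1) by (simp add: mult.commute)
qed

lemma integral_sum_unit_intervals:
  fixes g :: "real \<Rightarrow> real"
  assumes "g integrable_on {0..real m}"
  shows "integral {0..real m} g = (\<Sum>k=1..m. integral {real k - 1..real k} g)"
  using assms
proof (induction m)
  case (Suc m)
  have "g integrable_on {0..real m}"
    using Suc.prems by (rule integrable_subinterval_real) auto
  then show ?case
    using Suc Henstock_Kurzweil_Integration.integral_combine[where a = 0 and c = "real m" and b = "real (Suc m)" and f = g] by simp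
qed simp

lemma cos_powr_unit_interval_error:
  fixes \<sigma> :: real
  assumes "0 \<le> \<sigma>" "2 \<le> k" "m > 0"
  defines "g \<equiv> \<lambda>x. cos (2 * pi * x / real m) / x powr \<sigma>"
  shows "\<bar>g (real k) - integral {real k - 1..real k} g\<bar> \<le> 1 / (real k - 1) powr \<sigma> - 1 / real k powr \<sigma> + 2 * pi / real m"
proof -
  have k1: "1 \<le> real k - 1"
    using assms by simp
  have "continuous_on {real k - 1..real k} g"
    unfolding g_def using k1 assms(3) by (intro continuous_intros) auto
  then have "g integrable_on {real k - 1..real k}"
    by (rule integrable_continuous_real)
  moreover have "\<bar>g (real k) - g x\<bar> \<le> 1 / (real k - 1) powr \<sigma> - 1 / real k powr \<sigma> + 2 * pi / real m"
    if x: "x \<in> {real k - 1..real k}" for x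
  proof -
    have "(real k - 1) powr \<sigma> \<le> x powr \<sigma>" "x powr \<sigma> \<le> real k powr \<sigma>"
      using x k1 assms(1) by (auto intro: powr_mono2)
    moreover have "0 < (real k - 1) powr \<sigma>"
      using k1 by simp
    ultimately have "1 / real k powr \<sigma> \<le> 1 / x powr \<sigma>" "1 / x powr \<sigma> \<le> 1 / (real k - 1) powr \<sigma>"
      using assms(2) by (auto intro!: divide_left_mono mult_pos_pos)
    then have "\<bar>1 / real k powr \<sigma> - 1 / x powr \<sigma>\<bar> \<le> 1 / (real k - 1) powr \<sigma> - 1 / real k powr \<sigma>"
      by linarith
    moreover have "\<bar>2 * pi * real k / real m - 2 * pi * x / real m\<bar> \<le> 2 * pi / real m"
    proof -
      have "2 * pi * real k / real m - 2 * pi * x / real m = 2 * pi / real m * (real k - x)"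
        by (simp add: diff_divide_distrib[symmetric] right_diff_distrib)
      then show ?thesis
        using x mult_left_le[of "real k - x" "2 * pi / real m"] by simp
    qed
    moreover have "1 \<le> x powr \<sigma>"
      using x k1 assms(1) by (intro ge_one_powr_ge_zero) auto
    then have "\<bar>g (real k) - g x\<bar> \<le> \<bar>1 / real k powr \<sigma> - 1 / x powr \<sigma>\<bar> + \<bar>2 * pi * real k / real m - 2 * pi * x / real m\<bar>"
      unfolding g_def using assms by (intro abs_cos_div_diff_le) auto
    ultimately show ?thesis
      by linarith
  qed
  ultimately show ?thesis
    using abs_sub_integral_le[of "real k - 1" "real k" g "real k"] by simp
qed

lemma cos_powr_first_interval_error:
  fixes \<sigma> c :: real
  assumes "\<sigma> < 1" "1 \<le> c"
  defines "g \<equiv> \<lambda>x. cos (2 * pi * x / c) / x powr \<sigma>"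
  shows "\<bar>g 1 - integral {0..1} g\<bar> \<le> 1 + 1 / (1 - \<sigma>)"
proof -
  have "g integrable_on {0..c}"
    using has_integral_cos_div_powr_scaled[of \<sigma> c] assms unfolding g_def by (auto simp: integrable_on_def)
  then have "g integrable_on {0..1}"
    by (rule integrable_subinterval_real) (use assms in auto)
  moreover have "(\<lambda>x. x powr (- \<sigma>)) integrable_on {0..1}"
    using assms by (intro integrable_on_powr_from_0) auto
  moreover have "norm (g x) \<le> x powr (- \<sigma>)" if "x \<in> {0..1}" for x
    using that abs_cos_div_powr_le[of x] by (simp add: g_def)
  ultimately have "norm (integral {0..1} g) \<le> integral {0..1} (\<lambda>x. x powr (- \<sigma>))"
    by (rule integral_norm_bound_integral)
  also have "\<dots> = 1 / (1 - \<sigma>)"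
    using has_integral_powr_from_0[of "- \<sigma>" 1] assms by (simp add: integral_unique)
  finally have "\<bar>integral {0..1} g\<bar> \<le> 1 / (1 - \<sigma>)"
    by simp
  moreover have "\<bar>g 1\<bar> \<le> 1"
    by (simp add: g_def)
  ultimately show ?thesis
    using abs_triangle_ineq4[of "g 1" "integral {0..1} g"] by linarith
qed

lemma cos_powr_sum_estimate:
  fixes \<sigma> :: real
  assumes "0 \<le> \<sigma>" "\<sigma> < 1" "m \<ge> 1"
  shows "\<bar>cos_powr_sum \<sigma> m - real m powr (1 - \<sigma>) * cos_powr_integral \<sigma>\<bar> \<le> 2 + 1 / (1 - \<sigma>) + 2 * pi"
proof -
  define g where "g x = cos (2 * pi * x / real m) / x powr \<sigma>" for x
  define e where "e k = g (real k) - integral {real k - 1..real k} g" for k :: nat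
  have "(g has_integral real m powr (1 - \<sigma>) * cos_powr_integral \<sigma>) {0..real m}"
    unfolding g_def using assms by (intro has_integral_cos_div_powr_scaled) auto
  then have "real m powr (1 - \<sigma>) * cos_powr_integral \<sigma> = (\<Sum>k=1..m. integral {real k - 1..real k} g)"
    using integral_sum_unit_intervals[of g m] by (auto simp: integrable_on_def integral_unique)
  then have "cos_powr_sum \<sigma> m - real m powr (1 - \<sigma>) * cos_powr_integral \<sigma> = (\<Sum>k=1..m. e k)"
    by (simp add: cos_powr_sum_def e_def g_def sum_subtractf)
  also have "\<dots> = e 1 + (\<Sum>k=2..m. e k)"
    using assms by (simp add: sum.atLeast_Suc_atMost numeral_2_eq_2)
  finally have split: "cos_powr_sum \<sigma> m - real m powr (1 - \<sigma>) * cos_powr_integral \<sigma> = e 1 + (\<Sum>k=2..m. e k)" .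
  have e1: "\<bar>e 1\<bar> \<le> 1 + 1 / (1 - \<sigma>)"
    using cos_powr_first_interval_error[of \<sigma> "real m"] assms unfolding e_def g_def by simp
  have "\<bar>\<Sum>k=2..m. e k\<bar> \<le> (\<Sum>k=2..m. \<bar>e k\<bar>)"
    by (rule sum_abs)
  also have "\<dots> \<le> (\<Sum>k=2..m. 1 / (real k - 1) powr \<sigma> - 1 / real k powr \<sigma> + 2 * pi / real m)"
    using assms unfolding e_def g_def by (intro sum_mono cos_powr_unit_interval_error) auto
  also have "\<dots> = 1 - 1 / real m powr \<sigma> + (real m - 1) * (2 * pi / real m)"
  proof -
    have "(\<Sum>k=2..m. 1 / (real k - 1) powr \<sigma> - 1 / real k powr \<sigma>) = 1 - 1 / real m powr \<sigma>"
      using sum_telescope''[of 1 m "\<lambda>k. - 1 / real k powr \<sigma>"] assms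
      by (simp add: numeral_2_eq_2 of_nat_diff)
    then show ?thesis
      using assms by (simp add: sum.distrib of_nat_diff)
  qed
  also have "\<dots> \<le> 1 + 2 * pi"
    using assms by (simp add: field_simps)
  finally show ?thesis
    unfolding split using e1 by linarith
qed

section \<open>Asymptotics of the Farey sum\<close>

lemma unreduced_farey_sum_eq:
  "unreduced_farey_sum s N = (\<Sum>m=1..N. cos_powr_sum s m / real m powr s)"
proof -
  have pairs: "index_pairs N = (\<lambda>(m, j). (j, m)) ` (SIGMA m:{1..N}. {1..m})"
    by (auto simp: index_pairs_def image_iff)
  have "inj_on (\<lambda>(m, j). (j, m)) (SIGMA m:{1..N}. {1..m})"
    by (auto simp: inj_on_def)
  then have "unreduced_farey_sum s N = (\<Sum>(m, j)\<in>(SIGMA m:{1..N}. {1..m}). farey_term s j m)"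
    unfolding unreduced_farey_sum_def pairs by (subst sum.reindex) (auto simp: case_prod_beta)
  also have "\<dots> = (\<Sum>m=1..N. \<Sum>j=1..m. farey_term s j m)"
    by (simp add: sum.Sigma)
  finally show ?thesis
    by (simp add: farey_term_def cos_powr_sum_def powr_mult sum_divide_distrib divide_divide_eq_left)
qed

lemma unreduced_farey_sum_minus_power_sum:
  fixes \<sigma> :: real
  assumes "0 \<le> \<sigma>" "\<sigma> < 1" "N \<ge> 1"
  shows "\<bar>unreduced_farey_sum \<sigma> N - cos_powr_integral \<sigma> * (\<Sum>m=1..N. real m powr (1 - 2 * \<sigma>))\<bar>
    \<le> (2 + 1 / (1 - \<sigma>) + 2 * pi) / (1 - \<sigma>) * real N powr (1 - \<sigma>)"
proof -
  define I where "I = cos_powr_integral \<sigma>"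
  define C where "C = 2 + 1 / (1 - \<sigma>) + 2 * pi"
  have "C \<ge> 0"
    using assms by (simp add: C_def)
  have "real m powr (1 - 2 * \<sigma>) = real m powr (1 - \<sigma>) / real m powr \<sigma>" for m :: nat
    using powr_diff[of "real m" "1 - \<sigma>" \<sigma>] by simp
  then have "unreduced_farey_sum \<sigma> N - I * (\<Sum>m=1..N. real m powr (1 - 2 * \<sigma>))
      = (\<Sum>m=1..N. (cos_powr_sum \<sigma> m - real m powr (1 - \<sigma>) * I) / real m powr \<sigma>)"
    by (simp add: unreduced_farey_sum_eq sum_distrib_left sum_subtractf[symmetric] diff_divide_distrib
        mult.commute)
  also have "\<bar>\<dots>\<bar> \<le> (\<Sum>m=1..N. C * real m powr (- \<sigma>))"
  proof (rule order.trans[OF sum_abs sum_mono])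
    fix m assume "m \<in> {1..N}"
    then have "\<bar>cos_powr_sum \<sigma> m - real m powr (1 - \<sigma>) * I\<bar> \<le> C"
      using cos_powr_sum_estimate[of \<sigma> m] assms by (simp add: I_def C_def)
    then show "\<bar>(cos_powr_sum \<sigma> m - real m powr (1 - \<sigma>) * I) / real m powr \<sigma>\<bar> \<le> C * real m powr (- \<sigma>)"
      by (simp add: abs_divide divide_right_mono powr_minus_divide)
  qed
  also have "\<dots> \<le> C * (real N powr (1 - \<sigma>) / (1 - \<sigma>))"
  proof -
    have "(\<Sum>m=1..N. real m powr (- \<sigma>)) \<le> (real N powr (1 - \<sigma>) - \<sigma>) / (1 - \<sigma>)"
      using sum_powr_minus_integral(2)[of "- \<sigma>" N] assms by simp
    also have "\<dots> \<le> real N powr (1 - \<sigma>) / (1 - \<sigma>)"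
      using assms by (simp add: divide_right_mono)
    finally show ?thesis
      using \<open>C \<ge> 0\<close> by (simp add: sum_distrib_left[symmetric] mult_left_mono del: times_divide_eq_right)
  qed
  finally show ?thesis
    by (simp add: I_def C_def)
qed

lemma unreduced_farey_sum_estimate:
  fixes \<sigma> :: real
  assumes "0 \<le> \<sigma>" "\<sigma> < 1"
  obtains K where "\<And>N. N \<ge> 1 \<Longrightarrow>
    \<bar>unreduced_farey_sum \<sigma> N - cos_powr_integral \<sigma> / (2 - 2 * \<sigma>) * real N powr (2 - 2 * \<sigma>)\<bar>
      \<le> K * real N powr (1 - \<sigma>)"
proof
  fix N :: nat
  assume "N \<ge> 1"
  define I where "I = cos_powr_integral \<sigma>"
  have "\<bar>(\<Sum>m=1..N. real m powr (1 - 2 * \<sigma>)) - real N powr (2 - 2 * \<sigma>) / (2 - 2 * \<sigma>)\<bar>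
      \<le> (1 + 1 / (2 - 2 * \<sigma>)) * real N powr (1 - \<sigma>)"
    using abs_sum_powr_minus_integral_le[of "1 - 2 * \<sigma>" "1 - \<sigma>" N] assms \<open>N \<ge> 1\<close>
    by (simp add: algebra_simps)
  then have "\<bar>I\<bar> * \<bar>(\<Sum>m=1..N. real m powr (1 - 2 * \<sigma>)) - real N powr (2 - 2 * \<sigma>) / (2 - 2 * \<sigma>)\<bar>
      \<le> \<bar>I\<bar> * ((1 + 1 / (2 - 2 * \<sigma>)) * real N powr (1 - \<sigma>))"
    by (rule mult_left_mono) simp
  then have "\<bar>I * (\<Sum>m=1..N. real m powr (1 - 2 * \<sigma>)) - I / (2 - 2 * \<sigma>) * real N powr (2 - 2 * \<sigma>)\<bar>
      \<le> \<bar>I\<bar> * ((1 + 1 / (2 - 2 * \<sigma>)) * real N powr (1 - \<sigma>))"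
    by (simp add: abs_mult[symmetric] right_diff_distrib)
  with unreduced_farey_sum_minus_power_sum[OF assms \<open>N \<ge> 1\<close>]
  show "\<bar>unreduced_farey_sum \<sigma> N - cos_powr_integral \<sigma> / (2 - 2 * \<sigma>) * real N powr (2 - 2 * \<sigma>)\<bar>
      \<le> ((2 + 1 / (1 - \<sigma>) + 2 * pi) / (1 - \<sigma>) + \<bar>I\<bar> * (1 + 1 / (2 - 2 * \<sigma>))) * real N powr (1 - \<sigma>)"
    unfolding I_def by (simp add: algebra_simps abs_triangle_ineq4)
qed

lemma powr_estimate_at_floor:
  fixes f :: "nat \<Rightarrow> real" and A K p r x :: real
  assumes "0 \<le> p" "p - 1 \<le> r" "0 \<le> r" "x \<ge> 1"
    and f: "\<And>N. N \<ge> 1 \<Longrightarrow> \<bar>f N - A * real N powr p\<bar> \<le> K * real N powr r"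
  shows "\<bar>f (nat \<lfloor>x\<rfloor>) - A * x powr p\<bar> \<le> (\<bar>K\<bar> + \<bar>A\<bar> * p) * x powr r"
proof -
  define N where "N = nat \<lfloor>x\<rfloor>"
  have N: "N \<ge> 1" "real N \<le> x" "x < real N + 1"
    using assms(4) by (auto simp: N_def le_nat_floor)
  have "real N powr r \<le> x powr r"
    using N assms by (intro powr_mono2) auto
  then have "K * real N powr r \<le> \<bar>K\<bar> * x powr r"
    by (intro mult_mono) auto
  then have "\<bar>f N - A * real N powr p\<bar> \<le> \<bar>K\<bar> * x powr r"
    using f[OF N(1)] by linarith
  moreover have "\<bar>A * real N powr p - A * x powr p\<bar> \<le> \<bar>A\<bar> * (p * x powr r)"
  proof -
    have "0 \<le> x powr p - real N powr p"
      using N assms by (simp add: powr_mono2)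
    moreover have "x powr p - real N powr p \<le> p * x powr r"
      using N assms by (intro powr_diff_le_of_unit_gap) auto
    ultimately have "\<bar>real N powr p - x powr p\<bar> \<le> p * x powr r"
      by simp
    then show ?thesis
      unfolding right_diff_distrib[symmetric] abs_mult by (rule mult_left_mono) simp
  qed
  ultimately show ?thesis
    unfolding N_def[symmetric] using abs_triangle_ineq[of "f N - A * real N powr p" "A * real N powr p - A * x powr p"]
    by (simp add: algebra_simps)
qed

lemma abs_powr_minus_zeta2_partial_le:
  fixes x p :: real
  assumes "x \<ge> 1"
  shows "\<bar>x powr p - x powr p * zeta2_partial (nat \<lfloor>x\<rfloor>) / zeta2\<bar> \<le> 2 * x powr (p - 1)"
proof -
  define N where "N = nat \<lfloor>x\<rfloor>"
  have N: "N \<ge> 1" "x < real N + 1"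
    using assms by (auto simp: N_def le_nat_floor)
  moreover have "1 \<le> real N"
    using N(1) by simp
  ultimately have "x \<le> 2 * real N"
    by linarith
  then have "1 / real N \<le> 2 / x"
    using assms \<open>1 \<le> real N\<close> by (simp add: field_simps)
  then have "x powr p * (1 - zeta2_partial N / zeta2) \<le> x powr p * (2 / x)"
    using zeta2_partial_ratio_bounds(2)[OF N(1)] by (intro mult_left_mono) auto
  also have "\<dots> = 2 * x powr (p - 1)"
    using assms by (simp add: powr_diff)
  finally have "x powr p * (1 - zeta2_partial N / zeta2) \<le> 2 * x powr (p - 1)" .
  moreover have "0 \<le> x powr p * (1 - zeta2_partial N / zeta2)"
    using zeta2_partial_ratio_bounds(1)[OF N(1)] by simp
  moreover have "x powr p - x powr p * zeta2_partial N / zeta2 = x powr p * (1 - zeta2_partial N / zeta2)"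
    by (simp add: right_diff_distrib)
  ultimately show ?thesis
    unfolding N_def[symmetric] by simp
qed

lemma unreduced_farey_sum_floor_estimate:
  fixes \<sigma> :: real
  assumes "0 \<le> \<sigma>" "\<sigma> < 1"
  obtains C where "C \<ge> 0" and "\<And>x. x \<ge> 1 \<Longrightarrow>
    \<bar>unreduced_farey_sum \<sigma> (nat \<lfloor>x\<rfloor>) - cos_powr_integral \<sigma> / ((2 - 2 * \<sigma>) * zeta2)
       * x powr (2 - 2 * \<sigma>) * zeta2_partial (nat \<lfloor>x\<rfloor>)\<bar> \<le> C * x powr (1 - \<sigma>)"
proof -
  define p where "p = 2 - 2 * \<sigma>"
  define A where "A = cos_powr_integral \<sigma> / p"
  obtain K where K: "\<And>N. N \<ge> 1 \<Longrightarrow> \<bar>unreduced_farey_sum \<sigma> N - A * real N powr p\<bar> \<le> K * real N powr (1 - \<sigma>)"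
    using unreduced_farey_sum_estimate[OF assms] unfolding A_def p_def by blast
  have "0 \<le> \<bar>K\<bar> + \<bar>A\<bar> * p + 2 * \<bar>A\<bar>"
    using assms unfolding p_def by (intro add_nonneg_nonneg mult_nonneg_nonneg) auto
  moreover have "\<bar>unreduced_farey_sum \<sigma> (nat \<lfloor>x\<rfloor>) - A / zeta2 * x powr p * zeta2_partial (nat \<lfloor>x\<rfloor>)\<bar>
      \<le> (\<bar>K\<bar> + \<bar>A\<bar> * p + 2 * \<bar>A\<bar>) * x powr (1 - \<sigma>)" if "x \<ge> 1" for x
  proof -
    have main: "\<bar>unreduced_farey_sum \<sigma> (nat \<lfloor>x\<rfloor>) - A * x powr p\<bar> \<le> (\<bar>K\<bar> + \<bar>A\<bar> * p) * x powr (1 - \<sigma>)"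
      using assms that by (intro powr_estimate_at_floor K) (auto simp: p_def)
    have "x powr (p - 1) \<le> x powr (1 - \<sigma>)"
      using that assms by (intro powr_mono) (auto simp: p_def)
    then have "\<bar>x powr p - x powr p * zeta2_partial (nat \<lfloor>x\<rfloor>) / zeta2\<bar> \<le> 2 * x powr (1 - \<sigma>)"
      using abs_powr_minus_zeta2_partial_le[OF that, of p] by linarith
    moreover have "A * x powr p - A / zeta2 * x powr p * zeta2_partial (nat \<lfloor>x\<rfloor>)
        = A * (x powr p - x powr p * zeta2_partial (nat \<lfloor>x\<rfloor>) / zeta2)"
      by (simp add: algebra_simps)
    ultimately have zeta: "\<bar>A * x powr p - A / zeta2 * x powr p * zeta2_partial (nat \<lfloor>x\<rfloor>)\<bar>
        \<le> \<bar>A\<bar> * (2 * x powr (1 - \<sigma>))"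
      by (metis abs_ge_zero abs_mult mult_left_mono)
    show ?thesis
      using main zeta abs_triangle_ineq[of "unreduced_farey_sum \<sigma> (nat \<lfloor>x\<rfloor>) - A * x powr p"
          "A * x powr p - A / zeta2 * x powr p * zeta2_partial (nat \<lfloor>x\<rfloor>)"]
      by (simp add: algebra_simps)
  qed
  ultimately show ?thesis
    using that unfolding A_def p_def by (simp add: mult.assoc)
qed

lemma F_sum_minus_power_moebius:
  fixes s c :: real
  assumes "n \<ge> 1"
  shows "F_sum n s - c * real n powr (2 - 2 * s)
    = (\<Sum>d=1..n. moebius_mu d * (unreduced_farey_sum s (n div d)
        - c * (real n / real d) powr (2 - 2 * s) * zeta2_partial (n div d)) / real d powr (2 * s))"
proof -
  have scale: "real n powr (2 - 2 * s) / (real d)\<^sup>2 = (real n / real d) powr (2 - 2 * s) / real d powr (2 * s)"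
    if "d \<in> {1..n}" for d
  proof -
    have "(real d)\<^sup>2 = real d powr (2 - 2 * s) * real d powr (2 * s)"
      using that by (simp add: powr_add[symmetric] powr_numeral)
    then show ?thesis
      by (simp add: powr_divide divide_divide_eq_left)
  qed
  have "c * real n powr (2 - 2 * s)
      = (\<Sum>d=1..n. moebius_mu d * (c * (real n / real d) powr (2 - 2 * s) * zeta2_partial (n div d)) / real d powr (2 * s))"
  proof -
    have "c * real n powr (2 - 2 * s)
        = c * real n powr (2 - 2 * s) * (\<Sum>d=1..n. moebius_mu d * zeta2_partial (n div d) / (real d)\<^sup>2)"
      using sum_moebius_zeta2_partial[OF assms] by simp
    also have "\<dots> = (\<Sum>d=1..n. moebius_mu d * zeta2_partial (n div d) * c * (real n powr (2 - 2 * s) / (real d)\<^sup>2))"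
      by (simp add: sum_distrib_left mult_ac)
    also have "\<dots> = (\<Sum>d=1..n. moebius_mu d * zeta2_partial (n div d) * c * ((real n / real d) powr (2 - 2 * s) / real d powr (2 * s)))"
      by (rule sum.cong[OF refl]) (simp only: scale)
    also have "\<dots> = (\<Sum>d=1..n. moebius_mu d * (c * (real n / real d) powr (2 - 2 * s) * zeta2_partial (n div d)) / real d powr (2 * s))"
      by (simp add: mult_ac)
    finally show ?thesis .
  qed
  then show ?thesis
    by (simp add: F_sum_moebius sum_subtractf[symmetric] right_diff_distrib diff_divide_distrib)
qed

lemma abs_sum_moebius_le:
  fixes \<sigma> C :: real and h :: "nat \<Rightarrow> real"
  assumes "0 < \<sigma>" "0 \<le> C" and h: "\<And>d. d \<in> {1..n} \<Longrightarrow> \<bar>h d\<bar> \<le> C * (real n / real d) powr (1 - \<sigma>)"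
  shows "\<bar>\<Sum>d=1..n. moebius_mu d * h d / real d powr (2 * \<sigma>)\<bar> \<le> C * (1 + 1 / \<sigma>) * real n powr (1 - \<sigma>)"
proof -
  have "\<bar>\<Sum>d=1..n. moebius_mu d * h d / real d powr (2 * \<sigma>)\<bar>
      \<le> (\<Sum>d=1..n. C * real n powr (1 - \<sigma>) * real d powr (-1 - \<sigma>))"
  proof (rule order.trans[OF sum_abs sum_mono])
    fix d assume d: "d \<in> {1..n}"
    have "\<bar>moebius_mu d * h d / real d powr (2 * \<sigma>)\<bar> \<le> \<bar>h d\<bar> / real d powr (2 * \<sigma>)"
      using abs_moebius_mu_le[of d] by (simp add: abs_mult abs_divide divide_right_mono mult_left_le_one_le)
    also have "\<dots> \<le> C * (real n / real d) powr (1 - \<sigma>) / real d powr (2 * \<sigma>)"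
      using h[OF d] by (simp add: divide_right_mono)
    also have "\<dots> = C * real n powr (1 - \<sigma>) * real d powr (-1 - \<sigma>)"
    proof -
      have "real d powr (-1 - \<sigma>) = 1 / real d powr (1 + \<sigma>)"
        by (simp add: powr_minus_divide[symmetric])
      then show ?thesis
        using d by (simp add: powr_divide powr_add[symmetric] divide_divide_eq_left algebra_simps)
    qed
    finally show "\<bar>moebius_mu d * h d / real d powr (2 * \<sigma>)\<bar> \<le> C * real n powr (1 - \<sigma>) * real d powr (-1 - \<sigma>)" .
  qed
  also have "\<dots> \<le> C * real n powr (1 - \<sigma>) * (1 + 1 / \<sigma>)"
    using sum_powr_minus_one_minus_le[OF assms(1), of n] assms(2)
    by (simp add: sum_distrib_left[symmetric] mult_left_mono)
  finally show ?thesis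
    by (simp add: mult_ac)
qed

theorem theorem2p8:
  fixes \<sigma> :: real
  assumes "0 < \<sigma>" and "\<sigma> < 1"
  shows "\<exists>C. \<forall>n::nat. n \<ge> 1 \<longrightarrow>
           \<bar>F_sum n \<sigma> - real n powr (2 * (1 - \<sigma>)) / (2 * (1 - \<sigma>) * zeta2)
                * (LBINT t=0..1. cos (2 * pi * t) / t powr \<sigma>)\<bar>
           \<le> C * real n powr (1 - \<sigma>)"
proof -
  define c where "c = cos_powr_integral \<sigma> / ((2 - 2 * \<sigma>) * zeta2)"
  obtain C where "C \<ge> 0" and C: "\<And>x. x \<ge> 1 \<Longrightarrow>
      \<bar>unreduced_farey_sum \<sigma> (nat \<lfloor>x\<rfloor>) - c * x powr (2 - 2 * \<sigma>) * zeta2_partial (nat \<lfloor>x\<rfloor>)\<bar>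
        \<le> C * x powr (1 - \<sigma>)"
    using unreduced_farey_sum_floor_estimate[OF less_imp_le[OF assms(1)] assms(2)] unfolding c_def by blast
  have "\<bar>F_sum n \<sigma> - c * real n powr (2 - 2 * \<sigma>)\<bar> \<le> C * (1 + 1 / \<sigma>) * real n powr (1 - \<sigma>)"
    if "n \<ge> 1" for n
    unfolding F_sum_minus_power_moebius[OF that]
  proof (rule abs_sum_moebius_le[OF assms(1) \<open>C \<ge> 0\<close>])
    fix d assume "d \<in> {1..n}"
    then show "\<bar>unreduced_farey_sum \<sigma> (n div d) - c * (real n / real d) powr (2 - 2 * \<sigma>) * zeta2_partial (n div d)\<bar>
        \<le> C * (real n / real d) powr (1 - \<sigma>)"
      using C[of "real n / real d"] by (simp add: floor_divide_of_nat_eq)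
  qed
  moreover have "real n powr (2 * (1 - \<sigma>)) / (2 * (1 - \<sigma>) * zeta2) * (LBINT t=0..1. cos (2 * pi * t) / t powr \<sigma>)
      = c * real n powr (2 - 2 * \<sigma>)" for n :: nat
    unfolding LBINT_cos_div_powr[OF assms(2)] c_def by (simp add: algebra_simps)
  ultimately show ?thesis
    by auto
qed

end
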